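(* Let $M\in\mathbb R^{n\times n}$ be sufficient, $B$ a complementary basis, $i\in B$, and suppose $B'=(B\setminus\{i\})\cup\{\bar i\}$ is a basis (i.e. $A_{\cdot B'}$ is invertible). Then $\mathcal C(B\setminus\{i\})$ is a facet (face of dimension $n-1$) of both $\mathcal C(B)$ and $\mathcal C(B')$, $\mathcal C(B)\cap\mathcal C(B')=\mathcal C(B\setminus\{i\})$, and for every complementary basis $B''\notin\{B,B'\}$ the cone $\mathcal C(B'')$ does not intersect the relative interior of $\mathcal C(B\setminus\{i\})$.
   Context: Let $M\in\mathbb R^{n\times n}$ and $A=[\,I\;\;-M\,]\in\mathbb R^{n\times 2n}$, with columns indexed by $\{1,\dots,2n\}$; for $J\subseteq\{1,\dots,2n\}$, $A_{\cdot J}$ denotes the submatrix of columns indexed by $J$. For $i\in\{1,\dots,2n\}$ the complementary index is $\bar i=i+n$ if $i\le n$ and $\bar i=i-n$ if $i>n$. A set $J$ is complementary if $i\in J$ implies $\bar i\notin J$. A complementary basis is a complementary set $B$ with $|B|=n$ and $A_{\cdot B}$ invertible. For a complementary set $J$, the complementary cone is $\mathcal C(J)=\{A_{\cdot J}\lambda:\lambda\ge 0\}$. $M$ is column sufficient if $[z_i(Mz)_i\le 0\ \forall i]\Rightarrow[z_i(Mz)_i=0\ \forall i]$; row sufficient if $M^T$ is column sufficient; sufficient if both. *)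

theory Defs
  imports "HOL-Analysis.Analysis"
begin

text \<open>Columns of A = [I, -M] are indexed by 'n + 'n: Inl i is the i-th column of I,
  Inr i is the i-th column of -M (corresponds to index i+n in the paper).\<close>

definition lcp_col :: "real^'n^'n \<Rightarrow> ('n + 'n) \<Rightarrow> real^'n" where
  "lcp_col M j = (case j of Inl i \<Rightarrow> axis i 1 | Inr i \<Rightarrow> - column i M)"

definition compl_idx :: "('n + 'n) \<Rightarrow> ('n + 'n)" where
  "compl_idx j = (case j of Inl i \<Rightarrow> Inr i | Inr i \<Rightarrow> Inl i)"

definition complementary :: "('n + 'n) set \<Rightarrow> bool" where
  "complementary J \<longleftrightarrow> (\<forall>j\<in>J. compl_idx j \<notin> J)"

text \<open>A_{.B} invertible: |B| = n and the square matrix whose columns are the columns of A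
  indexed by B (in some ordering) is invertible.\<close>
definition is_basis :: "real^'n^'n \<Rightarrow> ('n + 'n) set \<Rightarrow> bool" where
  "is_basis M B \<longleftrightarrow> (\<exists>f. bij_betw f (UNIV :: 'n set) B \<and>
      invertible ((\<chi> r k. lcp_col M (f k) $ r) :: real^'n^'n))"

definition compl_basis :: "real^'n^'n \<Rightarrow> ('n + 'n) set \<Rightarrow> bool" where
  "compl_basis M B \<longleftrightarrow> complementary B \<and> is_basis M B"

definition compl_cone :: "real^'n^'n \<Rightarrow> ('n + 'n) set \<Rightarrow> (real^'n) set" where
  "compl_cone M J = {(\<Sum>j\<in>J. l j *\<^sub>R lcp_col M j) | l. \<forall>j\<in>J. l j \<ge> 0}"

definition column_sufficient :: "real^'n^'n \<Rightarrow> bool" where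
  "column_sufficient M \<longleftrightarrow> (\<forall>z::real^'n.
     (\<forall>i. z $ i * (M *v z) $ i \<le> 0) \<longrightarrow> (\<forall>i. z $ i * (M *v z) $ i = 0))"

definition row_sufficient :: "real^'n^'n \<Rightarrow> bool" where
  "row_sufficient M \<longleftrightarrow> column_sufficient (transpose M)"

definition sufficient :: "real^'n^'n \<Rightarrow> bool" where
  "sufficient M \<longleftrightarrow> column_sufficient M \<and> row_sufficient M"

end

theory Submission
  imports Defs
begin

(* Let A = [I, -M] with columns lcp_col M j, indexed by 'n + 'n.  Every point of a
   complementary cone C(J) is written as a combination  lcp_comb M l = (sum of l j * A_j)
   with coefficients l >= 0 vanishing outside J.  Two facts drive the whole proof:
   (1) if B is a basis, such coefficients supported in B are unique; this gives that C(J)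
       is a face of C(B) for every J <= B, that aff_dim C(J) = card J, and that the
       relative interior of C(J) consists of the points with all J-coefficients positive;
   (2) if M is column sufficient and one point is represented on two complementary sets
       with coefficients l1, l2, then l1 j * l2 (compl j) = 0 for every j.
   From (2), a point of C(B) and C(B') has a zero coefficient at i or at its complement,
   so C(B) and C(B') meet exactly in C(B - {i}).  If C(B'') meets the relative interior of
   C(B - {i}), (2) forces the B''-representation to live on B or on B', hence (1) shows it
   equals the positive representation on B - {i}; so B - {i} <= B'', and a complementary
   basis containing B - {i} is B or B'. *)

section \<open>Coefficient representation of complementary cones\<close>

definition lcp_comb :: "real^'n^'n \<Rightarrow> (('n + 'n) \<Rightarrow> real) \<Rightarrow> real^'n" where
  "lcp_comb M l = (\<Sum>j\<in>UNIV. l j *\<^sub>R lcp_col M j)"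

lemma sum_restrict_coeffs:
  "(\<Sum>j\<in>J. l j *\<^sub>R (c j :: real^'n)) =
   (\<Sum>j\<in>(UNIV::('n + 'n) set). (if j \<in> J then l j else 0) *\<^sub>R c j)"
proof -
  have "(\<Sum>j\<in>(UNIV::('n + 'n) set). (if j \<in> J then l j else 0) *\<^sub>R c j) =
        (\<Sum>j\<in>(UNIV::('n + 'n) set). (if j \<in> J then l j *\<^sub>R c j else 0))"
    by (rule sum.cong) auto
  also have "\<dots> = (\<Sum>j\<in>J. l j *\<^sub>R c j)" by (simp add: sum.If_cases)
  finally show ?thesis by simp
qed

lemma compl_cone_eq_lcp_comb:
  "compl_cone M J = {lcp_comb M l | l. (\<forall>j. 0 \<le> l j) \<and> (\<forall>j. j \<notin> J \<longrightarrow> l j = 0)}"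
proof (intro set_eqI iffI)
  fix x assume "x \<in> compl_cone M J"
  then obtain l where l: "\<forall>j\<in>J. 0 \<le> l j" "x = (\<Sum>j\<in>J. l j *\<^sub>R lcp_col M j)"
    unfolding compl_cone_def by blast
  show "x \<in> {lcp_comb M l | l. (\<forall>j. 0 \<le> l j) \<and> (\<forall>j. j \<notin> J \<longrightarrow> l j = 0)}"
    by (rule CollectI, rule exI[of _ "\<lambda>j. if j \<in> J then l j else 0"])
      (use l in \<open>auto simp: lcp_comb_def sum_restrict_coeffs[where J=J]\<close>)
next
  fix x assume "x \<in> {lcp_comb M l | l. (\<forall>j. 0 \<le> l j) \<and> (\<forall>j. j \<notin> J \<longrightarrow> l j = 0)}"
  then obtain l where l: "\<forall>j. 0 \<le> l j" "\<forall>j. j \<notin> J \<longrightarrow> l j = 0" "x = lcp_comb M l"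
    by blast
  have "x = (\<Sum>j\<in>J. l j *\<^sub>R lcp_col M j)"
    unfolding l(3) lcp_comb_def sum_restrict_coeffs[where J=J] by (rule sum.cong) (use l in auto)
  then show "x \<in> compl_cone M J" unfolding compl_cone_def using l by blast
qed

lemma lcp_comb_lincomb:
  "lcp_comb M (\<lambda>j. u * a j + v * b j) = u *\<^sub>R lcp_comb M a + v *\<^sub>R lcp_comb M b"
  by (simp add: lcp_comb_def scaleR_add_left sum.distrib scaleR_sum_right)

lemma lcp_comb_diff: "lcp_comb M (\<lambda>j. a j - b j) = lcp_comb M a - lcp_comb M b"
  by (simp add: lcp_comb_def scaleR_diff_left sum_subtractf)

lemma lcp_comb_as_w_minus_Mv:
  fixes M :: "real^'n^'n"
  shows "lcp_comb M l = (\<chi> k. l (Inl k)) - M *v (\<chi> k. l (Inr k))"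
proof -
  have "lcp_comb M l = (\<Sum>j\<in>(UNIV::'n set) <+> (UNIV::'n set). l j *\<^sub>R lcp_col M j)"
    unfolding lcp_comb_def UNIV_Plus_UNIV ..
  also have "\<dots> = (\<Sum>k\<in>UNIV. l (Inl k) *\<^sub>R axis k 1) - (\<Sum>k\<in>UNIV. l (Inr k) *\<^sub>R column k M)"
    by (simp only: sum.Plus[OF finite finite]) (simp add: lcp_col_def sum_negf)
  also have "\<dots> = (\<chi> k. l (Inl k)) - M *v (\<chi> k. l (Inr k))"
    by (simp add: vec_eq_iff sum_component axis_def column_def matrix_vector_mult_def
        mult.commute if_distrib[of "\<lambda>x. _ * x"] sum.delta cong: if_cong)
  finally show ?thesis .
qed

lemma zero_in_compl_cone: "0 \<in> compl_cone M J"
  unfolding compl_cone_eq_lcp_comb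
  by (rule CollectI, rule exI[of _ "\<lambda>j. 0"]) (simp add: lcp_comb_def)

lemma compl_cone_mono: "J \<subseteq> K \<Longrightarrow> compl_cone M J \<subseteq> compl_cone M K"
  unfolding compl_cone_eq_lcp_comb by blast

lemma convex_compl_cone:
  fixes M :: "real^'n^'n"
  shows "convex (compl_cone M J)"
  unfolding convex_def compl_cone_eq_lcp_comb
proof clarify
  fix a b :: "('n + 'n) \<Rightarrow> real" and u v :: real
  assume a: "\<forall>j. 0 \<le> a j" "\<forall>j. j \<notin> J \<longrightarrow> a j = 0"
    and b: "\<forall>j. 0 \<le> b j" "\<forall>j. j \<notin> J \<longrightarrow> b j = 0"
    and uv: "0 \<le> u" "0 \<le> v" "u + v = 1"
  show "\<exists>l. u *\<^sub>R lcp_comb M a + v *\<^sub>R lcp_comb M b = lcp_comb M l \<and>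
            (\<forall>j. 0 \<le> l j) \<and> (\<forall>j. j \<notin> J \<longrightarrow> l j = 0)"
    by (rule exI[of _ "\<lambda>j. u * a j + v * b j"]) (use a b uv in \<open>auto simp: lcp_comb_lincomb\<close>)
qed

lemma basis_coeffs_zero:
  fixes M :: "real^'n^'n"
  assumes "is_basis M B" "\<forall>j. j \<notin> B \<longrightarrow> l j = 0" "lcp_comb M l = 0"
  shows "l j = 0"
proof -
  obtain f where f: "bij_betw f (UNIV::'n set) B"
    and inv: "invertible ((\<chi> r k. lcp_col M (f k) $ r) :: real^'n^'n)"
    using assms(1) unfolding is_basis_def by blast
  define A where "A = ((\<chi> r k. lcp_col M (f k) $ r) :: real^'n^'n)"
  define x where "x = (\<chi> k. l (f k))"
  have "lcp_comb M l = (\<Sum>j\<in>B. l j *\<^sub>R lcp_col M j)"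
    unfolding lcp_comb_def sum_restrict_coeffs[where J=B] by (rule sum.cong) (use assms(2) in auto)
  also have "\<dots> = (\<Sum>k\<in>UNIV. l (f k) *\<^sub>R lcp_col M (f k))"
    using sum.reindex_bij_betw[OF f, of "\<lambda>j. l j *\<^sub>R lcp_col M j"] by simp
  also have "\<dots> = A *v x"
    by (simp add: A_def x_def vec_eq_iff matrix_vector_mult_def sum_component mult.commute)
  finally have "A *v x = 0" using assms(3) by simp
  moreover obtain A' where "A' ** A = mat 1" using inv unfolding invertible_def A_def by blast
  ultimately have "x = 0"
    by (metis matrix_vector_mul_assoc matrix_vector_mul_lid matrix_vector_mult_0_right)
  show ?thesis
  proof (cases "j \<in> B")
    case True
    then obtain k where "j = f k" using f unfolding bij_betw_def by auto
    then show ?thesis using \<open>x = 0\<close> unfolding x_def by (simp add: vec_eq_iff)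
  qed (use assms(2) in auto)
qed

lemma basis_coeffs_unique:
  fixes M :: "real^'n^'n"
  assumes "is_basis M B" "\<forall>j. j \<notin> B \<longrightarrow> a j = 0" "\<forall>j. j \<notin> B \<longrightarrow> b j = 0"
    and "lcp_comb M a = lcp_comb M b"
  shows "a j = b j"
  using basis_coeffs_zero[OF assms(1), of "\<lambda>j. a j - b j" j] assms(2-4) by (simp add: lcp_comb_diff)

lemma basis_card:
  fixes M :: "real^'n^'n"
  assumes "is_basis M B" shows "card B = CARD('n)"
  using assms unfolding is_basis_def by (metis bij_betw_same_card)

section \<open>Faces, dimension and relative interior of subcones of a basic cone\<close>

text \<open>For J \<subseteq> B the cone C(J) is a face of C(B): an open segment of C(B) through a point
  of C(J) has, by uniqueness of coefficients, zero coefficients outside J at both ends.\<close>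
lemma compl_cone_face_of_basis_cone:
  fixes M :: "real^'n^'n"
  assumes "is_basis M B" "J \<subseteq> B"
  shows "compl_cone M J face_of compl_cone M B"
  unfolding face_of_def
proof (intro conjI ballI impI)
  show "compl_cone M J \<subseteq> compl_cone M B" by (rule compl_cone_mono[OF assms(2)])
  show "convex (compl_cone M J)" by (rule convex_compl_cone)
next
  fix a b x assume "a \<in> compl_cone M B" "b \<in> compl_cone M B" "x \<in> compl_cone M J"
    and seg: "x \<in> open_segment a b"
  then obtain la lb lx where la: "\<forall>j. 0 \<le> la j" "\<forall>j. j \<notin> B \<longrightarrow> la j = 0" "a = lcp_comb M la"
    and lb: "\<forall>j. 0 \<le> lb j" "\<forall>j. j \<notin> B \<longrightarrow> lb j = 0" "b = lcp_comb M lb"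
    and lx: "\<forall>j. 0 \<le> lx j" "\<forall>j. j \<notin> J \<longrightarrow> lx j = 0" "x = lcp_comb M lx"
    unfolding compl_cone_eq_lcp_comb by blast
  obtain u where u: "0 < u" "u < 1" "x = (1 - u) *\<^sub>R a + u *\<^sub>R b"
    using seg by (auto simp: in_segment)
  have comb: "lcp_comb M (\<lambda>j. (1 - u) * la j + u * lb j) = lcp_comb M lx"
    using u la lb lx by (simp add: lcp_comb_lincomb)
  have lx_B: "\<forall>j. j \<notin> B \<longrightarrow> lx j = 0" using lx(2) assms(2) by blast
  have "la j = 0 \<and> lb j = 0" if "j \<notin> J" for j
  proof -
    have "(1 - u) * la j + u * lb j = 0"
      using basis_coeffs_unique[OF assms(1) _ lx_B comb, of j] la lb lx(2) that by auto
    moreover have "(1 - u) * la j \<ge> 0" "u * lb j \<ge> 0" using u la lb by auto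
    ultimately show ?thesis using u by (auto simp: add_nonneg_eq_0_iff)
  qed
  then show "a \<in> compl_cone M J" "b \<in> compl_cone M J"
    unfolding compl_cone_eq_lcp_comb using la lb by auto
qed

text \<open>For J \<subseteq> B the columns indexed by J are independent and span C(J), so
  C(J) has dimension card J.\<close>
lemma aff_dim_compl_cone:
  fixes M :: "real^'n^'n"
  assumes b: "is_basis M B" and J: "J \<subseteq> B"
  shows "aff_dim (compl_cone M J) = int (card J)"
proof -
  let ?c = "lcp_col M"
  have "aff_dim (compl_cone M J) = int (dim ((+) (- 0) ` compl_cone M J))"
    by (rule aff_dim_eq_dim) (use zero_in_compl_cone in \<open>auto intro: hull_inc\<close>)
  then have ad: "aff_dim (compl_cone M J) = int (dim (compl_cone M J))" by simp
  have cols_in_cone: "?c ` J \<subseteq> compl_cone M J"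
  proof
    fix x assume "x \<in> ?c ` J"
    then obtain j where j: "j \<in> J" "x = ?c j" by blast
    have "lcp_comb M (\<lambda>k. if k = j then 1 else 0) = x"
      unfolding lcp_comb_def j(2) by (simp add: if_distrib[of "\<lambda>a. a *\<^sub>R _"] cong: if_cong)
    then show "x \<in> compl_cone M J"
      unfolding compl_cone_eq_lcp_comb using j by (auto intro!: exI[of _ "\<lambda>k. if k = j then 1 else 0"])
  qed
  have cone_in_span: "compl_cone M J \<subseteq> span (?c ` J)"
  proof
    fix x assume "x \<in> compl_cone M J"
    then obtain l where "x = (\<Sum>j\<in>J. l j *\<^sub>R ?c j)" unfolding compl_cone_def by blast
    then show "x \<in> span (?c ` J)" by (simp add: span_sum span_scale span_base)
  qed
  have inj: "inj_on ?c J"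
  proof (rule inj_onI, rule ccontr)
    fix a b assume ab: "a \<in> J" "b \<in> J" "?c a = ?c b" "a \<noteq> b"
    define l :: "('n + 'n) \<Rightarrow> real" where "l = (\<lambda>k. if k = a then 1 else if k = b then -1 else 0)"
    have "lcp_comb M l = ?c a - ?c b"
      unfolding lcp_comb_def l_def using ab(4)
      by (simp add: if_distrib[of "\<lambda>a. a *\<^sub>R _"] sum.If_cases cong: if_cong)
    then have "lcp_comb M l = 0" using ab by simp
    moreover have "\<forall>j. j \<notin> B \<longrightarrow> l j = 0" using ab J unfolding l_def by auto
    ultimately have "l a = 0" using basis_coeffs_zero[OF b] by blast
    then show False unfolding l_def by simp
  qed
  have indep: "independent (?c ` J)"
  proof
    assume "dependent (?c ` J)"
    then obtain u where u: "\<exists>v\<in>?c ` J. u v \<noteq> 0" "(\<Sum>v\<in>?c ` J. u v *\<^sub>R v) = 0"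
      using dependent_finite[of "?c ` J"] by auto
    have "(\<Sum>j\<in>J. u (?c j) *\<^sub>R ?c j) = 0"
      using u(2) sum.reindex[OF inj, of "\<lambda>v. u v *\<^sub>R v"] by simp
    then have "lcp_comb M (\<lambda>j. if j \<in> J then u (?c j) else 0) = 0"
      unfolding lcp_comb_def sum_restrict_coeffs[where J=J] .
    from basis_coeffs_zero[OF b _ this] J have "\<forall>j\<in>J. u (?c j) = 0" by (metis subsetD)
    then show False using u(1) by auto
  qed
  have "dim (compl_cone M J) = dim (?c ` J)"
    using dim_subset[OF cols_in_cone] dim_subset[OF cone_in_span] by simp
  also have "\<dots> = card J" using dim_eq_card_independent[OF indep] card_image[OF inj] by simp
  finally show ?thesis using ad by simp
qed

text \<open>Points of the relative interior of C(J), J \<subseteq> B, have strictly positive coefficients on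
  all of J: prolonging the segment from the point with all J-coefficients equal to 1
  slightly beyond q stays in C(J), which forces every J-coefficient of q to be positive.\<close>
lemma rel_interior_compl_cone_coeffs_pos:
  fixes M :: "real^'n^'n"
  assumes b: "is_basis M B" and J: "J \<subseteq> B" and q: "q \<in> rel_interior (compl_cone M J)"
  obtains l where "q = lcp_comb M l" "\<forall>j. j \<notin> J \<longrightarrow> l j = 0" "\<forall>j\<in>J. 0 < l j"
proof -
  have "q \<in> compl_cone M J" using q rel_interior_subset by blast
  then obtain l where l: "\<forall>j. 0 \<le> l j" "\<forall>j. j \<notin> J \<longrightarrow> l j = 0" "q = lcp_comb M l"
    unfolding compl_cone_eq_lcp_comb by blast
  define ind where "ind = (\<lambda>j. if j \<in> J then 1 else (0::real))"
  have "lcp_comb M ind \<in> compl_cone M J"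
    unfolding compl_cone_eq_lcp_comb ind_def by auto
  then have "lcp_comb M ind \<in> affine hull compl_cone M J" by (rule hull_inc)
  then obtain e where e: "1 < e" "(1 - e) *\<^sub>R lcp_comb M ind + e *\<^sub>R q \<in> compl_cone M J"
    using convex_rel_interior_if2[OF convex_compl_cone q] by blast
  then obtain m where m: "\<forall>j. 0 \<le> m j" "\<forall>j. j \<notin> J \<longrightarrow> m j = 0"
    and "(1 - e) *\<^sub>R lcp_comb M ind + e *\<^sub>R q = lcp_comb M m"
    unfolding compl_cone_eq_lcp_comb by blast
  then have "lcp_comb M (\<lambda>j. (1 - e) * ind j + e * l j) = lcp_comb M m"
    by (simp add: lcp_comb_lincomb l(3))
  then have coeff: "(1 - e) * ind j + e * l j = m j" for j
    by (rule basis_coeffs_unique[OF b, rotated 2]) (use l m J ind_def in auto)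
  have "0 < l j" if "j \<in> J" for j
  proof -
    have "e * l j \<ge> e - 1" using coeff[of j] m(1) that unfolding ind_def by (simp add: algebra_simps)
    then have "0 < e * l j" using e(1) by linarith
    then show ?thesis using e(1) by (simp add: zero_less_mult_iff)
  qed
  then show ?thesis using that l by blast
qed

lemma compl_compl [simp]: "compl_idx (compl_idx j) = j"
  by (cases j) (auto simp: compl_idx_def)

lemma compl_neq [simp]: "compl_idx j \<noteq> j"
  by (cases j) (auto simp: compl_idx_def)

lemma compl_Inl [simp]: "compl_idx (Inl k) = Inr k"
  and compl_Inr [simp]: "compl_idx (Inr k) = Inl k"
  by (auto simp: compl_idx_def)

lemma complementary_subset: "complementary B \<Longrightarrow> J \<subseteq> B \<Longrightarrow> complementary J"
  unfolding complementary_def by blast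

text \<open>A complementary basis has n elements, one from each of the n pairs {j, compl j},
  so it contains exactly one index of every pair.\<close>
lemma compl_basis_meets_pair:
  fixes M :: "real^'n^'n"
  assumes "compl_basis M B" shows "j \<in> B \<or> compl_idx j \<in> B"
proof -
  define p :: "'n + 'n \<Rightarrow> 'n" where "p = case_sum id id"
  have c: "complementary B" and cb: "card B = CARD('n)"
    using assms basis_card unfolding compl_basis_def by auto
  have inj: "inj_on p B"
  proof (rule inj_onI)
    fix a b assume ab: "a \<in> B" "b \<in> B" "p a = p b"
    show "a = b"
    proof (rule ccontr)
      assume "a \<noteq> b"
      with ab(3) have "b = compl_idx a" unfolding p_def by (cases a; cases b) auto
      then show False using c ab unfolding complementary_def by blast
    qed
  qed
  have "card (p ` B) = CARD('n)" using card_image[OF inj] cb by simp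
  then have "p ` B = UNIV" by (simp add: card_eq_UNIV_imp_eq_UNIV)
  then obtain b where b: "b \<in> B" "p b = p j" by (metis UNIV_I imageE)
  then have "b = j \<or> b = compl_idx j" unfolding p_def by (cases b; cases j) auto
  then show ?thesis using b by auto
qed

lemma complementary_pivot:
  assumes "complementary B" "i \<in> B"
  shows "complementary ((B - {i}) \<union> {compl_idx i})"
  unfolding complementary_def
proof
  fix j assume j: "j \<in> B - {i} \<union> {compl_idx i}"
  show "compl_idx j \<notin> B - {i} \<union> {compl_idx i}"
  proof (cases "j = compl_idx i")
    case False
    then have "j \<in> B" "j \<noteq> i" using j by auto
    moreover have "compl_idx j \<noteq> compl_idx i" using \<open>j \<noteq> i\<close> by (metis compl_compl)
    ultimately show ?thesis using assms(1) unfolding complementary_def by auto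
  qed (use assms in \<open>auto simp: complementary_def\<close>)
qed

lemma compl_basis_containing_facet:
  fixes M :: "real^'n^'n"
  assumes B: "compl_basis M B" "i \<in> B" and B'': "compl_basis M B''" "B - {i} \<subseteq> B''"
  shows "B'' = B \<or> B'' = (B - {i}) \<union> {compl_idx i}"
proof -
  have cB'': "complementary B''" using B''(1) unfolding compl_basis_def by blast
  have "B'' \<subseteq> (B - {i}) \<union> {i, compl_idx i}"
  proof
    fix x assume x: "x \<in> B''"
    show "x \<in> (B - {i}) \<union> {i, compl_idx i}"
    proof (cases "x \<in> B")
      case False
      then have "compl_idx x \<in> B" using compl_basis_meets_pair[OF B(1), of x] by blast
      moreover have "compl_idx x \<notin> B''" using x cB'' unfolding complementary_def by blast
      ultimately have "compl_idx x = i" using B''(2) by blast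
      then show ?thesis by (metis compl_compl insertCI UnI2)
    qed auto
  qed
  moreover have "i \<in> B'' \<or> compl_idx i \<in> B''" by (rule compl_basis_meets_pair[OF B''(1)])
  moreover have "\<not> (i \<in> B'' \<and> compl_idx i \<in> B'')" using cB'' unfolding complementary_def by blast
  moreover have "compl_idx i \<notin> B - {i}"
    using B compl_basis_meets_pair unfolding compl_basis_def complementary_def by blast
  ultimately show ?thesis using B''(2) B(2) by blast
qed

section \<open>The complementarity property of column sufficient matrices\<close>

text \<open>Writing the representations as w1 - M v1 = w2 - M v2 with w_k, v_k \<ge> 0
  complementary, d = v1 - v2 satisfies d_k (M d)_k = -(v1_k w2_k + v2_k w1_k) \<le> 0, so column
  sufficiency forces all these products to vanish.\<close>
lemma column_sufficient_complementarity:
  fixes M :: "real^'n^'n"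
  assumes cs: "column_sufficient M" and c1: "complementary J1" and c2: "complementary J2"
    and p1: "\<forall>j. 0 \<le> l1 j" and z1: "\<forall>j. j \<notin> J1 \<longrightarrow> l1 j = 0"
    and p2: "\<forall>j. 0 \<le> l2 j" and z2: "\<forall>j. j \<notin> J2 \<longrightarrow> l2 j = 0"
    and eq: "lcp_comb M l1 = lcp_comb M l2"
  shows "l1 j * l2 (compl_idx j) = 0"
proof -
  define w1 where "w1 = (\<chi> k. l1 (Inl k))"
  define v1 where "v1 = (\<chi> k. l1 (Inr k))"
  define w2 where "w2 = (\<chi> k. l2 (Inl k))"
  define v2 where "v2 = (\<chi> k. l2 (Inr k))"
  have e: "w1 - M *v v1 = w2 - M *v v2"
    using eq unfolding lcp_comb_as_w_minus_Mv w1_def v1_def w2_def v2_def .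
  have comp1: "w1 $ k * v1 $ k = 0" for k
    using c1 z1 unfolding complementary_def w1_def v1_def
    by (metis compl_Inl mult_eq_0_iff vec_lambda_beta)
  have comp2: "w2 $ k * v2 $ k = 0" for k
    using c2 z2 unfolding complementary_def w2_def v2_def
    by (metis compl_Inl mult_eq_0_iff vec_lambda_beta)
  define d where "d = v1 - v2"
  have Md: "M *v d = w1 - w2"
    using e unfolding d_def by (simp add: matrix_vector_mult_diff_distrib algebra_simps)
  have key: "d $ k * (M *v d) $ k = - (v1 $ k * w2 $ k + v2 $ k * w1 $ k)" for k
  proof -
    have "d $ k * (w1 - w2) $ k = - (v1 $ k * w2 $ k + v2 $ k * w1 $ k)"
      using comp1[of k] comp2[of k] unfolding d_def by (simp add: algebra_simps) (auto simp: mult.commute)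
    then show ?thesis using Md by simp
  qed
  have nn: "v1 $ k * w2 $ k \<ge> 0" "v2 $ k * w1 $ k \<ge> 0" for k
    using p1 p2 unfolding v1_def w2_def v2_def w1_def by auto
  have "\<forall>k. d $ k * (M *v d) $ k \<le> 0" using key nn by (smt (verit))
  then have "\<forall>k. d $ k * (M *v d) $ k = 0" using cs unfolding column_sufficient_def by blast
  then have "v1 $ k * w2 $ k = 0 \<and> v2 $ k * w1 $ k = 0" for k
    using key[of k] nn[of k] by (smt (verit))
  then show ?thesis
    unfolding v1_def w2_def v2_def w1_def by (cases j) (auto simp: mult.commute)
qed

section \<open>Adjacent complementary cones\<close>

lemma adjacent_cones_inter:
  fixes M :: "real^'n^'n"
  assumes cs: "column_sufficient M" and cB: "complementary B" and i: "i \<in> B"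
  shows "compl_cone M B \<inter> compl_cone M ((B - {i}) \<union> {compl_idx i}) = compl_cone M (B - {i})"
proof
  show "compl_cone M (B - {i}) \<subseteq> compl_cone M B \<inter> compl_cone M ((B - {i}) \<union> {compl_idx i})"
    using compl_cone_mono[of "B - {i}"] by blast
next
  show "compl_cone M B \<inter> compl_cone M ((B - {i}) \<union> {compl_idx i}) \<subseteq> compl_cone M (B - {i})"
  proof
    fix q assume "q \<in> compl_cone M B \<inter> compl_cone M ((B - {i}) \<union> {compl_idx i})"
    then obtain la lb where la: "\<forall>j. 0 \<le> la j" "\<forall>j. j \<notin> B \<longrightarrow> la j = 0" "q = lcp_comb M la"
      and lb: "\<forall>j. 0 \<le> lb j" "\<forall>j. j \<notin> (B - {i}) \<union> {compl_idx i} \<longrightarrow> lb j = 0" "q = lcp_comb M lb"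
      unfolding compl_cone_eq_lcp_comb by blast
    have "la i * lb (compl_idx i) = 0"
      by (rule column_sufficient_complementarity[OF cs cB complementary_pivot[OF cB i] la(1,2) lb(1,2)])
        (use la lb in simp)
    then consider "la i = 0" | "lb (compl_idx i) = 0" by auto
    then show "q \<in> compl_cone M (B - {i})"
    proof cases
      case 1
      then show ?thesis unfolding compl_cone_eq_lcp_comb using la by (auto intro!: exI[of _ la])
    next
      case 2
      have "\<forall>j. j \<notin> B - {i} \<longrightarrow> lb j = 0"
      proof (intro allI impI)
        fix j assume "j \<notin> B - {i}"
        then show "lb j = 0" using 2 lb(2) by (cases "j = compl_idx i") auto
      qed
      then show ?thesis unfolding compl_cone_eq_lcp_comb using lb by (auto intro!: exI[of _ lb])
    qed
  qed
qed

text \<open>The B''-representation l2 of a common point q may only use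
  indices whose complement has coefficient zero in the positive representation l1 of q on
  B - {i}, i.e. indices of B or the complement of i; in either case it lives on one of the
  bases B, B', and uniqueness of coefficients gives l2 = l1.\<close>
lemma relint_facet_meets_cone_imp_subset:
  fixes M :: "real^'n^'n"
  assumes cs: "column_sufficient M" and B: "compl_basis M B" "i \<in> B"
    and B': "is_basis M ((B - {i}) \<union> {compl_idx i})" and B'': "compl_basis M B''"
    and q: "q \<in> compl_cone M B''" "q \<in> rel_interior (compl_cone M (B - {i}))"
  shows "B - {i} \<subseteq> B''"
proof -
  have cB: "complementary B" and bB: "is_basis M B" using B(1) unfolding compl_basis_def by auto
  have cB'': "complementary B''" using B'' unfolding compl_basis_def by auto
  have ni: "compl_idx i \<notin> B" using cB B(2) unfolding complementary_def by blast
  obtain l1 where l1: "q = lcp_comb M l1" "\<forall>j. j \<notin> B - {i} \<longrightarrow> l1 j = 0" "\<forall>j\<in>B - {i}. 0 < l1 j"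
    using rel_interior_compl_cone_coeffs_pos[OF bB _ q(2)] by blast
  obtain l2 where l2: "\<forall>j. 0 \<le> l2 j" "\<forall>j. j \<notin> B'' \<longrightarrow> l2 j = 0" "q = lcp_comb M l2"
    using q(1) unfolding compl_cone_eq_lcp_comb by blast
  have l1_nonneg: "\<forall>j. 0 \<le> l1 j" using l1 by (metis less_imp_le order_refl)
  have l2_support: "j \<in> B \<or> j = compl_idx i" if "l2 j \<noteq> 0" for j
  proof -
    have "l1 (compl_idx j) * l2 j = 0"
      using column_sufficient_complementarity[OF cs complementary_subset[OF cB] cB''
          l1_nonneg l1(2) l2(1,2), of "compl_idx j"] l1(1) l2(3) by simp
    then have "compl_idx j \<notin> B - {i}" using l1(3) that by force
    then show ?thesis using compl_basis_meets_pair[OF B(1), of j] by (metis DiffI compl_compl singletonD)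
  qed
  have "l2 (compl_idx i) = 0"
  proof (rule ccontr)
    assume nz: "l2 (compl_idx i) \<noteq> 0"
    then have "i \<notin> B''" using l2(2) cB'' unfolding complementary_def by (metis compl_compl)
    then have "\<forall>j. j \<notin> (B - {i}) \<union> {compl_idx i} \<longrightarrow> l2 j = 0" using l2_support l2(2) by blast
    moreover have "\<forall>j. j \<notin> (B - {i}) \<union> {compl_idx i} \<longrightarrow> l1 j = 0" using l1(2) by blast
    ultimately have "l2 (compl_idx i) = l1 (compl_idx i)"
      using basis_coeffs_unique[OF B'] l1(1) l2(3) by metis
    then show False using nz l1(2) ni by auto
  qed
  then have "\<forall>j. j \<notin> B \<longrightarrow> l2 j = 0" using l2_support by blast
  moreover have "\<forall>j. j \<notin> B \<longrightarrow> l1 j = 0" using l1(2) by blast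
  ultimately have "l2 j = l1 j" for j using basis_coeffs_unique[OF bB] l1(1) l2(3) by metis
  then show ?thesis using l1(3) l2(2) by force
qed

theorem mainTheorem2:
  fixes M :: "real^'n^'n" and B :: "('n + 'n) set" and i :: "'n + 'n"
  assumes "sufficient M"
    and "compl_basis M B"
    and "i \<in> B"
    and "is_basis M ((B - {i}) \<union> {compl_idx i})"
  shows "compl_cone M (B - {i}) face_of compl_cone M B
       \<and> aff_dim (compl_cone M (B - {i})) = int CARD('n) - 1
       \<and> compl_cone M (B - {i}) face_of compl_cone M ((B - {i}) \<union> {compl_idx i})
       \<and> compl_cone M B \<inter> compl_cone M ((B - {i}) \<union> {compl_idx i}) = compl_cone M (B - {i})
       \<and> (\<forall>B''. compl_basis M B'' \<and> B'' \<noteq> B \<and> B'' \<noteq> (B - {i}) \<union> {compl_idx i} \<longrightarrow>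
            compl_cone M B'' \<inter> rel_interior (compl_cone M (B - {i})) = {})"
proof -
  have cs: "column_sufficient M" using assms(1) unfolding sufficient_def by blast
  have cB: "complementary B" and bB: "is_basis M B" using assms(2) unfolding compl_basis_def by auto
  have "card (B - {i}) = CARD('n) - 1" using basis_card[OF bB] assms(3) by simp
  then have dim: "aff_dim (compl_cone M (B - {i})) = int CARD('n) - 1"
    using aff_dim_compl_cone[OF bB, of "B - {i}"] zero_less_card_finite[where 'a='n] by auto
  have "B - {i} \<subseteq> (B - {i}) \<union> {compl_idx i}" by blast
  note face' = compl_cone_face_of_basis_cone[OF assms(4) this]
  have others: "compl_cone M B'' \<inter> rel_interior (compl_cone M (B - {i})) = {}"
    if "compl_basis M B''" "B'' \<noteq> B" "B'' \<noteq> (B - {i}) \<union> {compl_idx i}" for B''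
    using relint_facet_meets_cone_imp_subset[OF cs assms(2,3,4) that(1)]
      compl_basis_containing_facet[OF assms(2,3) that(1)] that(2,3) by blast
  show ?thesis
    using compl_cone_face_of_basis_cone[OF bB, of "B - {i}"] dim face'
      adjacent_cones_inter[OF cs cB assms(3)] others by blast
qed

end
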